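(* Let $P$ be a finite poset, let $\overline{P}$ be its dual poset, and let $J(P)$ be the distributive lattice of lower ideals of $P$ ordered by inclusion, with the height function $\operatorname{rk}(I)=\#I$. Then $$\mathsf{Z}_{J(P),\operatorname{rk}}(1+qx)=\mathsf{L}_{\overline{P}}(x).$$
   Context: $q$ is an indeterminate; $[n]_q=(q^n-1)/(q-1)$ for $n\in\mathbb{Z}$. For a finite poset $R$ with height function $h:R\to\mathbb{N}$ (i.e. $h(x)<h(y)$ whenever $y$ covers $x$), the $q$-Zeta polynomial $\mathsf{Z}_{R,h}\in\mathbb{Q}(q)[x]$ is the unique polynomial such that $\mathsf{Z}_{R,h}([n]_q)=\sum_{e_1\le\cdots\le e_{n-1}\text{ in }R}q^{h(e_1)+\cdots+h(e_{n-1})}$ for all integers $n\ge2$ (such a polynomial exists; explicitly it is $\sum_{k\ge1}\sum_{c_1<\cdots<c_k}q^{\sum h(c_i)}\mathsf{E}_{(h(c_1),\dots,h(c_k))}((x-[k+1]_q)/q^{k+1})$, where $\mathsf{E}_a$ is the unique polynomial with $\mathsf{E}_a([n]_q)=\sum_{m\in\mathbb{N}^k,\sum m_i=n}q^{\sum a_im_i}$ for $n\ge0$). For a finite poset $R$, its order polytope is $Q_R=\{z\in\mathbb{R}^R:0\le z_p\le1\text{ for all }p,\ z_p\le z_{p'}\text{ whenever }p\le p'\}$, and its $q$-order polynomial $\mathsf{L}_R\in\mathbb{Q}(q)[x]$ is the unique polynomial with $\mathsf{L}_R([n]_q)=\sum_{z\in nQ_R\cap\mathbb{Z}^R}q^{\sum_{p}z_p}$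 for all $n\ge0$. *)

theory Defs
  imports "HOL-Computational_Algebra.Polynomial" "HOL-Computational_Algebra.Fraction_Field"
    "HOL-Library.FuncSet"
begin

type_synonym qfield = "rat poly fract"

definition qvar :: qfield where
  "qvar = Fract [:0, 1:] 1"

definition qint :: "nat \<Rightarrow> qfield" where
  "qint n = (qvar ^ n - 1) / (qvar - 1)"

definition multichains :: "'a set \<Rightarrow> ('a \<Rightarrow> 'a \<Rightarrow> bool) \<Rightarrow> nat \<Rightarrow> 'a list set" where
  "multichains R le k = {es. length es = k \<and> set es \<subseteq> R \<and> sorted_wrt le es}"

definition qZeta :: "'a set \<Rightarrow> ('a \<Rightarrow> 'a \<Rightarrow> bool) \<Rightarrow> ('a \<Rightarrow> nat) \<Rightarrow> qfield poly" where
  "qZeta R le h = (THE p. \<forall>n\<ge>2. poly p (qint n) =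
      (\<Sum>es\<in>multichains R le (n - 1). qvar ^ (\<Sum>e\<leftarrow>es. h e)))"

text \<open>Lattice points of the dilated order polytope n Q_R.\<close>
definition order_points :: "'a set \<Rightarrow> ('a \<Rightarrow> 'a \<Rightarrow> bool) \<Rightarrow> nat \<Rightarrow> ('a \<Rightarrow> nat) set" where
  "order_points R le n = {z \<in> R \<rightarrow>\<^sub>E {0..n}. \<forall>p\<in>R. \<forall>p'\<in>R. le p p' \<longrightarrow> z p \<le> z p'}"

definition qOrder :: "'a set \<Rightarrow> ('a \<Rightarrow> 'a \<Rightarrow> bool) \<Rightarrow> qfield poly" where
  "qOrder R le = (THE p. \<forall>n. poly p (qint n) =
      (\<Sum>z\<in>order_points R le n. qvar ^ (\<Sum>p\<in>R. z p)))"

definition lower_ideals :: "'a set \<Rightarrow> ('a \<Rightarrow> 'a \<Rightarrow> bool) \<Rightarrow> 'a set set" where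
  "lower_ideals A le = {I. I \<subseteq> A \<and> (\<forall>x\<in>I. \<forall>y\<in>A. le y x \<longrightarrow> y \<in> I)}"

end

theory Submission
  imports Defs
begin

text \<open>A multichain \<open>I\<^sub>1 \<subseteq> \<dots> \<subseteq> I\<^sub>k\<close> of lower ideals of \<open>P\<close> corresponds to the
  order-reversing map \<open>z p = #{i. p \<in> I\<^sub>i}\<close> into \<open>{0..k}\<close>, with \<open>\<Sum>|I\<^sub>i| = \<Sum>\<^sub>p z p\<close>. Hence
  \<open>Z([k+1]\<^sub>q) = L([k]\<^sub>q)\<close>, which is the claim because \<open>[k+1]\<^sub>q = 1 + q[k]\<^sub>q\<close> and a polynomial
  is determined by its values at the q-integers.

  That \<open>L\<close> exists needs an argument. Let \<open>f\<^sub>R(n) = \<Sum>\<^sub>z q\<^bsup>\<Sum>\<^sub>p z p\<^esup>\<close>, \<open>z\<close> ranging over the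
  lattice points of \<open>nQ\<^sub>R\<close>. Grouping the points of \<open>(n+1)Q\<^sub>R\<close> by their support \<open>U\<close>, an upper
  set, gives \<open>f\<^sub>R(n+1) = \<Sum>\<^sub>U q\<^bsup>|U|\<^esup> f\<^sub>U(n)\<close>. By induction on \<open>|R|\<close> this makes
  \<open>f\<^sub>R(n)\<close> a linear combination of the \<open>q\<^bsup>i n\<^esup>\<close>, \<open>i \<le> |R|\<close>, i.e. a polynomial in
  \<open>q\<^sup>n = 1 + (q - 1)[n]\<^sub>q\<close>.\<close>

section \<open>The q-integers\<close>

lemma qvar_power: "qvar ^ n = Fract ([:0, 1:] ^ n) 1"
  by (induct n) (simp_all add: qvar_def One_fract_def)

lemma qvar_power_inject: "qvar ^ i = qvar ^ j \<longleftrightarrow> i = j"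
proof
  assume "qvar ^ i = qvar ^ j"
  then have "([:0, 1:] ^ i :: rat poly) = [:0, 1:] ^ j"
    by (simp add: qvar_power eq_fract)
  then have "degree ([:0, 1:] ^ i :: rat poly) = degree ([:0, 1:] ^ j :: rat poly)"
    by simp
  then show "i = j"
    using degree_linear_power[of "0::rat"] by simp
qed simp

lemma qvar_neq_1: "qvar \<noteq> 1"
  using qvar_power_inject[of 1 0] by simp

lemma qvar_neq_0: "qvar \<noteq> 0"
  using qvar_power_inject[of 1 2] by (simp add: power2_eq_square)

lemma qint_times_qvar_minus_1: "qint n * (qvar - 1) = qvar ^ n - 1"
  using qvar_neq_1 by (simp add: qint_def)

lemma qint_Suc: "qint (Suc n) = 1 + qvar * qint n"
proof -
  have "(1 + qvar * qint n) * (qvar - 1) = qvar * (qint n * (qvar - 1)) + (qvar - 1)"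
    by (simp add: algebra_simps)
  also have "\<dots> = qvar ^ Suc n - 1"
    by (simp only: qint_times_qvar_minus_1) (simp add: algebra_simps)
  also have "\<dots> = qint (Suc n) * (qvar - 1)"
    by (simp only: qint_times_qvar_minus_1)
  finally show ?thesis
    using qvar_neq_1 by simp
qed

lemma qint_inject: "qint n = qint m \<longleftrightarrow> n = m"
  using qint_times_qvar_minus_1[of n] qint_times_qvar_minus_1[of m] qvar_power_inject[of n m]
  by (metis diff_add_cancel)

lemma poly_eq_if_eq_on_qints:
  fixes p p' :: "qfield poly"
  assumes "\<And>n. n \<ge> m \<Longrightarrow> poly p (qint n) = poly p' (qint n)"
  shows "p = p'"
proof (rule ccontr)
  assume "p \<noteq> p'"
  then have "finite {x. poly (p - p') x = 0}"
    by (intro poly_roots_finite) simp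
  moreover have "qint ` {m..} \<subseteq> {x. poly (p - p') x = 0}"
    using assms by auto
  ultimately have "finite (qint ` {m..})"
    by (rule finite_subset[rotated])
  moreover have "inj_on qint {m..}"
    by (simp add: inj_on_def qint_inject)
  ultimately show False
    using finite_imageD infinite_Ici by blast
qed

section \<open>Exponential polynomials in q\<close>

definition qexp_poly :: "nat \<Rightarrow> (nat \<Rightarrow> qfield) \<Rightarrow> bool" where
  "qexp_poly d F \<longleftrightarrow> (\<exists>c. \<forall>n. F n = (\<Sum>i<d. c i * qvar ^ (i * n)))"

lemma qexp_polyI:
  "(\<And>n. F n = (\<Sum>i<d. c i * qvar ^ (i * n))) \<Longrightarrow> qexp_poly d F"
  unfolding qexp_poly_def by blast

lemma qexp_poly_mono:
  assumes "qexp_poly d F" and "d \<le> d'"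
  shows "qexp_poly d' F"
proof -
  obtain c where c: "\<And>n. F n = (\<Sum>i<d. c i * qvar ^ (i * n))"
    using assms(1) unfolding qexp_poly_def by blast
  have "F n = (\<Sum>i<d'. (if i < d then c i else 0) * qvar ^ (i * n))" for n
    unfolding c using assms(2) by (intro sum.mono_neutral_cong_left) auto
  then show ?thesis
    by (rule qexp_polyI)
qed

lemma qexp_poly_cmult:
  assumes "qexp_poly d F"
  shows "qexp_poly d (\<lambda>n. a * F n)"
proof -
  obtain c where "\<And>n. F n = (\<Sum>i<d. c i * qvar ^ (i * n))"
    using assms unfolding qexp_poly_def by blast
  then have "a * F n = (\<Sum>i<d. (a * c i) * qvar ^ (i * n))" for n
    by (simp add: sum_distrib_left mult.assoc)
  then show ?thesis
    by (rule qexp_polyI)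
qed

lemma qexp_poly_add:
  assumes "qexp_poly d F" and "qexp_poly d G"
  shows "qexp_poly d (\<lambda>n. F n + G n)"
proof -
  obtain c where "\<And>n. F n = (\<Sum>i<d. c i * qvar ^ (i * n))"
    using assms(1) unfolding qexp_poly_def by blast
  moreover obtain e where "\<And>n. G n = (\<Sum>i<d. e i * qvar ^ (i * n))"
    using assms(2) unfolding qexp_poly_def by blast
  ultimately have "F n + G n = (\<Sum>i<d. (c i + e i) * qvar ^ (i * n))" for n
    by (simp add: sum.distrib distrib_right)
  then show ?thesis
    by (rule qexp_polyI)
qed

lemma qexp_poly_sum:
  assumes "finite S" and "\<And>x. x \<in> S \<Longrightarrow> qexp_poly d (F x)"
  shows "qexp_poly d (\<lambda>n. \<Sum>x\<in>S. F x n)"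
  using assms
proof (induction S rule: finite_induct)
  case empty
  show ?case
    by (rule qexp_polyI[where c = "\<lambda>_. 0"]) simp
next
  case (insert x S)
  then show ?case
    by (simp add: qexp_poly_add)
qed

text \<open>The recurrence is solved termwise: the coefficient of \<open>q^(i n)\<close>, \<open>i < a\<close>, is forced by
  \<open>c\<^sub>i q\<^sup>i = q\<^sup>a c\<^sub>i + h\<^sub>i\<close>, which is solvable as \<open>q\<^sup>i \<noteq> q\<^sup>a\<close>; the coefficient of \<open>q^(a n)\<close> absorbs
  the initial value.\<close>

lemma qexp_poly_recurrence:
  assumes rec: "\<And>n. F (Suc n) = qvar ^ a * F n + H n" and "qexp_poly a H"
  shows "qexp_poly (Suc a) F"
proof -
  obtain h where h: "\<And>n. H n = (\<Sum>i<a. h i * qvar ^ (i * n))"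
    using assms(2) unfolding qexp_poly_def by blast
  define c where "c i = (if i < a then h i / (qvar ^ i - qvar ^ a)
      else F 0 - (\<Sum>j<a. h j / (qvar ^ j - qvar ^ a)))" for i
  have c_rec: "c i * qvar ^ i = qvar ^ a * c i + h i" if "i < a" for i
  proof -
    have "qvar ^ i - qvar ^ a \<noteq> 0"
      using that qvar_power_inject[of i a] by simp
    then show ?thesis
      using that by (simp add: c_def field_simps)
  qed
  have "F n = (\<Sum>i<Suc a. c i * qvar ^ (i * n))" for n
  proof (induction n)
    case 0
    show ?case
      by (simp add: c_def)
  next
    case (Suc n)
    have "F (Suc n) = qvar ^ a * (c a * qvar ^ (a * n))
        + (\<Sum>i<a. (qvar ^ a * c i + h i) * qvar ^ (i * n))"
      by (simp add: rec Suc h sum_distrib_left sum.distrib algebra_simps)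
    also have "\<dots> = c a * qvar ^ (a * Suc n) + (\<Sum>i<a. c i * qvar ^ i * qvar ^ (i * n))"
      using c_rec by (simp add: power_add algebra_simps)
    also have "\<dots> = (\<Sum>i<Suc a. c i * qvar ^ (i * Suc n))"
      by (simp add: power_add algebra_simps)
    finally show ?case .
  qed
  then show ?thesis
    by (rule qexp_polyI)
qed

text \<open>Since \<open>q^n = 1 + (q - 1)[n]\<^sub>q\<close>, a polynomial in \<open>q^n\<close> is a polynomial in \<open>[n]\<^sub>q\<close>.\<close>

lemma qexp_poly_imp_poly_qint:
  assumes "qexp_poly d F"
  obtains p where "\<And>n. poly p (qint n) = F n"
proof -
  obtain c where c: "\<And>n. F n = (\<Sum>i<d. c i * qvar ^ (i * n))"
    using assms unfolding qexp_poly_def by blast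
  have q_pow: "1 + qint n * (qvar - 1) = qvar ^ n" for n
    by (simp add: qint_times_qvar_minus_1)
  have "poly (\<Sum>i<d. smult (c i) ([:1, qvar - 1:] ^ i)) (qint n) = F n" for n
    by (simp add: poly_sum q_pow c power_mult[symmetric] mult.commute)
  then show ?thesis
    by (rule that)
qed

section \<open>Lattice points of dilated order polytopes\<close>

definition order_gf :: "'a set \<Rightarrow> ('a \<Rightarrow> 'a \<Rightarrow> bool) \<Rightarrow> nat \<Rightarrow> qfield" where
  "order_gf R le n = (\<Sum>z\<in>order_points R le n. qvar ^ (\<Sum>p\<in>R. z p))"

lemma qOrder_eqI:
  assumes "\<And>n. poly p (qint n) = order_gf R le n"
  shows "qOrder R le = p"
  unfolding qOrder_def
proof (rule the_equality)
  fix p' assume "\<forall>n. poly p' (qint n) = (\<Sum>z\<in>order_points R le n. qvar ^ (\<Sum>p\<in>R. z p))"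
  then show "p' = p"
    using assms by (intro poly_eq_if_eq_on_qints[of 0]) (simp add: order_gf_def)
qed (use assms in \<open>simp add: order_gf_def\<close>)

lemma finite_order_points: "finite R \<Longrightarrow> finite (order_points R le n)"
  unfolding order_points_def
  by (rule finite_subset[of _ "R \<rightarrow>\<^sub>E {0..n}"]) (auto intro: finite_PiE)

text \<open>Upper sets are encoded as lower ideals of the dual order.\<close>

lemma support_in_lower_ideals_dual:
  assumes "z \<in> order_points R le n"
  shows "{p\<in>R. 0 < z p} \<in> lower_ideals R (\<lambda>x y. le y x)"
  using assms unfolding order_points_def lower_ideals_def by fastforce

text \<open>Lowering every coordinate on the support \<open>U\<close> by one identifies the points of
  \<open>(n+1)Q\<^sub>R\<close> with support \<open>U\<close> with the points of \<open>nQ\<^sub>U\<close>.\<close>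

lemma order_gf_fibre:
  assumes "finite R" and U: "U \<in> lower_ideals R (\<lambda>x y. le y x)"
  shows "(\<Sum>z\<in>{z\<in>order_points R le (Suc n). {p\<in>R. 0 < z p} = U}. qvar ^ (\<Sum>p\<in>R. z p))
       = qvar ^ card U * order_gf U le n"
proof -
  have UR: "U \<subseteq> R"
    using U unfolding lower_ideals_def by blast
  define lower where "lower z = (\<lambda>p\<in>U. z p - 1)" for z :: "'a \<Rightarrow> nat"
  define raise where "raise z p = (if p \<in> U then Suc (z p) else if p \<in> R then 0 else undefined)"
    for z :: "'a \<Rightarrow> nat" and p
  have "(\<Sum>z\<in>{z\<in>order_points R le (Suc n). {p\<in>R. 0 < z p} = U}. qvar ^ (\<Sum>p\<in>R. z p))
      = (\<Sum>z\<in>order_points U le n. qvar ^ card U * qvar ^ (\<Sum>p\<in>U. z p))"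
  proof (rule sum.reindex_bij_witness[where i = raise and j = lower])
    fix z assume z: "z \<in> {z\<in>order_points R le (Suc n). {p\<in>R. 0 < z p} = U}"
    then have "z \<in> extensional R"
      unfolding order_points_def by (auto simp: PiE_iff)
    with z UR show "raise (lower z) = z"
      unfolding raise_def lower_def extensional_def by fastforce
    show "lower z \<in> order_points U le n"
      using z UR unfolding lower_def order_points_def
      by (auto simp: PiE_iff subset_iff) (meson diff_le_mono)+
    have "(\<Sum>p\<in>R. z p) = (\<Sum>p\<in>U. z p)"
      using assms(1) UR z by (intro sum.mono_neutral_right) auto
    also have "\<dots> = (\<Sum>p\<in>U. Suc (lower z p))"
      using z by (intro sum.cong) (auto simp: lower_def)
    also have "\<dots> = card U + (\<Sum>p\<in>U. lower z p)"
      by (simp add: sum_Suc)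
    finally show "qvar ^ card U * qvar ^ (\<Sum>p\<in>U. lower z p) = qvar ^ (\<Sum>p\<in>R. z p)"
      by (simp add: power_add)
  next
    fix z assume z: "z \<in> order_points U le n"
    then have "z \<in> extensional U"
      unfolding order_points_def by (auto simp: PiE_iff)
    then show "lower (raise z) = z"
      unfolding raise_def lower_def extensional_def by auto
    show "raise z \<in> {z\<in>order_points R le (Suc n). {p\<in>R. 0 < z p} = U}"
      using z U UR unfolding raise_def order_points_def lower_ideals_def
      by (auto simp: PiE_iff extensional_def)
  qed
  then show ?thesis
    by (simp add: order_gf_def sum_distrib_left)
qed

lemma order_gf_Suc:
  assumes "finite R"
  shows "order_gf R le (Suc n)
       = (\<Sum>U\<in>lower_ideals R (\<lambda>x y. le y x). qvar ^ card U * order_gf U le n)"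
proof -
  have "finite (lower_ideals R (\<lambda>x y. le y x))"
    using assms unfolding lower_ideals_def by simp
  then have "order_gf R le (Suc n) = (\<Sum>U\<in>lower_ideals R (\<lambda>x y. le y x).
      \<Sum>z\<in>{z\<in>order_points R le (Suc n). {p\<in>R. 0 < z p} = U}. qvar ^ (\<Sum>p\<in>R. z p))"
    unfolding order_gf_def using assms finite_order_points support_in_lower_ideals_dual
    by (intro sum.group[symmetric]) auto
  also have "\<dots> = (\<Sum>U\<in>lower_ideals R (\<lambda>x y. le y x). qvar ^ card U * order_gf U le n)"
    using assms by (intro sum.cong order_gf_fibre) auto
  finally show ?thesis .
qed

text \<open>In \<open>order_gf_Suc\<close> the summand \<open>U = R\<close> is \<open>q^|R|\<close> times the previous value; all other
  summands are smaller instances, so induction on \<open>|R|\<close> applies \<open>qexp_poly_recurrence\<close>.\<close>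

lemma qexp_poly_order_gf:
  assumes "finite R"
  shows "qexp_poly (Suc (card R)) (order_gf R le)"
  using assms
proof (induction "card R" arbitrary: R rule: less_induct)
  case less
  define Us where "Us = lower_ideals R (\<lambda>x y. le y x) - {R}"
  have Us: "Us \<subseteq> Pow R - {R}"
    unfolding Us_def lower_ideals_def by blast
  have R_in: "R \<in> lower_ideals R (\<lambda>x y. le y x)"
    unfolding lower_ideals_def by blast
  have "order_gf R le (Suc n) = qvar ^ card R * order_gf R le n
      + (\<Sum>U\<in>Us. qvar ^ card U * order_gf U le n)" for n
    unfolding order_gf_Suc[OF less.prems] Us_def
    using less.prems R_in by (subst sum.remove) (auto simp: lower_ideals_def)
  moreover have "qexp_poly (card R) (\<lambda>n. \<Sum>U\<in>Us. qvar ^ card U * order_gf U le n)"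
  proof (rule qexp_poly_sum)
    show "finite Us"
      using Us less.prems finite_subset by fastforce
  next
    fix U assume "U \<in> Us"
    then have "U \<subset> R"
      using Us by blast
    then have "card U < card R" and "finite U"
      using less.prems by (auto intro: psubset_card_mono finite_subset)
    then have "qexp_poly (Suc (card U)) (order_gf U le)"
      by (rule less.hyps)
    then show "qexp_poly (card R) (\<lambda>n. qvar ^ card U * order_gf U le n)"
      using \<open>card U < card R\<close> by (intro qexp_poly_mono[OF qexp_poly_cmult]) auto
  qed
  ultimately show ?case
    by (rule qexp_poly_recurrence)
qed

lemma poly_qOrder_qint:
  assumes "finite R"
  shows "poly (qOrder R le) (qint n) = order_gf R le n"
proof -
  have "qexp_poly (Suc (card R)) (order_gf R le)"
    using assms by (rule qexp_poly_order_gf)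
  then obtain p where "\<And>n. poly p (qint n) = order_gf R le n"
    using qexp_poly_imp_poly_qint by blast
  then show ?thesis
    using qOrder_eqI by metis
qed

section \<open>Multichains of lower ideals\<close>

lemma qZeta_eqI:
  assumes "\<And>n. n \<ge> 2 \<Longrightarrow> poly p (qint n) =
      (\<Sum>es\<in>multichains R le (n - 1). qvar ^ (\<Sum>e\<leftarrow>es. h e))"
  shows "qZeta R le h = p"
  unfolding qZeta_def
proof (rule the_equality)
  fix p' assume "\<forall>n\<ge>2. poly p' (qint n) = (\<Sum>es\<in>multichains R le (n - 1). qvar ^ (\<Sum>e\<leftarrow>es. h e))"
  then show "p' = p"
    using assms by (intro poly_eq_if_eq_on_qints[of 2]) simp
qed (use assms in simp)

definition superlevels :: "'a set \<Rightarrow> nat \<Rightarrow> ('a \<Rightarrow> nat) \<Rightarrow> 'a set list" where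
  "superlevels A k z = map (\<lambda>i. {p\<in>A. k - i \<le> z p}) [0..<k]"

definition membership_count :: "'a set \<Rightarrow> 'a set list \<Rightarrow> 'a \<Rightarrow> nat" where
  "membership_count A es = (\<lambda>p\<in>A. card {i. i < length es \<and> p \<in> es ! i})"

lemma sorted_subset_nth_iff_card:
  assumes sorted: "sorted_wrt (\<subseteq>) es" and m: "m < length es"
  shows "p \<in> es ! m \<longleftrightarrow> length es - m \<le> card {i. i < length es \<and> p \<in> es ! i}"
proof -
  define S where "S = {i. i < length es \<and> p \<in> es ! i}"
  have "finite S"
    unfolding S_def by simp
  have nth_mono: "es ! i \<subseteq> es ! j" if "i \<le> j" "j < length es" for i j
    using sorted that sorted_wrt_nth_less[of "(\<subseteq>)" es i j] by (cases "i = j") auto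
  show ?thesis
    unfolding S_def[symmetric]
  proof
    assume "p \<in> es ! m"
    then have "{m..<length es} \<subseteq> S"
      unfolding S_def using nth_mono[of m] by (auto; blast)
    then have "card {m..<length es} \<le> card S"
      by (rule card_mono[OF \<open>finite S\<close>])
    then show "length es - m \<le> card S"
      by simp
  next
    assume card: "length es - m \<le> card S"
    show "p \<in> es ! m"
    proof (rule ccontr)
      assume "p \<notin> es ! m"
      then have "S \<subseteq> {Suc m..<length es}"
        unfolding S_def using nth_mono[of _ m] m by (auto simp: not_less_eq_eq[symmetric]; blast)
      then have "card S \<le> card {Suc m..<length es}"
        by (rule card_mono[rotated]) simp
      with card m show False
        by simp
    qed
  qed
qed

lemma superlevels_in_multichains:
  assumes "z \<in> order_points A (\<lambda>x y. le y x) k"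
  shows "superlevels A k z \<in> multichains (lower_ideals A le) (\<subseteq>) k"
  using assms
  unfolding superlevels_def multichains_def lower_ideals_def order_points_def sorted_wrt_iff_nth_less
  by (auto intro: order_trans)

lemma membership_count_in_order_points:
  assumes "es \<in> multichains (lower_ideals A le) (\<subseteq>) k"
  shows "membership_count A es \<in> order_points A (\<lambda>x y. le y x) k"
proof -
  have len: "length es = k" and ideals: "\<And>i. i < k \<Longrightarrow> es ! i \<in> lower_ideals A le"
    using assms unfolding multichains_def by auto
  have "card {i. i < k \<and> p \<in> es ! i} \<le> k" for p
    using card_mono[of "{..<k}" "{i. i < k \<and> p \<in> es ! i}"] by auto
  moreover have "card {i. i < k \<and> p \<in> es ! i} \<le> card {i. i < k \<and> q \<in> es ! i}"
    if "q \<in> A" "le q p" for p q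
    using ideals that unfolding lower_ideals_def by (intro card_mono) auto
  ultimately show ?thesis
    unfolding order_points_def membership_count_def len by auto
qed

lemma membership_count_superlevels:
  assumes "z \<in> A \<rightarrow>\<^sub>E {0..k}"
  shows "membership_count A (superlevels A k z) = z"
proof
  fix p
  show "membership_count A (superlevels A k z) p = z p"
  proof (cases "p \<in> A")
    case True
    then have "{i. i < k \<and> p \<in> superlevels A k z ! i} = {k - z p..<k}"
      using assms by (auto simp: superlevels_def PiE_iff)
    then show ?thesis
      using True assms by (auto simp: membership_count_def superlevels_def PiE_iff)
  next
    case False
    then show ?thesis
      using assms by (simp add: membership_count_def PiE_iff extensional_def)
  qed
qed

lemma superlevels_membership_count:
  assumes "es \<in> multichains (lower_ideals A le) (\<subseteq>) k"
  shows "superlevels A k (membership_count A es) = es"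
proof (rule nth_equalityI)
  have len: "length es = k" and sorted: "sorted_wrt (\<subseteq>) es"
    and sub: "\<And>i. i < k \<Longrightarrow> es ! i \<subseteq> A"
    using assms unfolding multichains_def lower_ideals_def by (auto dest: nth_mem)
  show "length (superlevels A k (membership_count A es)) = length es"
    using len by (simp add: superlevels_def)
  fix m assume "m < length (superlevels A k (membership_count A es))"
  then have "m < k"
    by (simp add: superlevels_def)
  then show "superlevels A k (membership_count A es) ! m = es ! m"
    using sub[of m] sorted_subset_nth_iff_card[OF sorted, of m] len
    by (auto simp: superlevels_def membership_count_def)
qed

lemma bij_betw_superlevels:
  "bij_betw (superlevels A k) (order_points A (\<lambda>x y. le y x) k)
     (multichains (lower_ideals A le) (\<subseteq>) k)"
proof (rule bij_betw_byWitness[where f' = "membership_count A"])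
  show "\<forall>z\<in>order_points A (\<lambda>x y. le y x) k. membership_count A (superlevels A k z) = z"
    by (auto simp: order_points_def intro: membership_count_superlevels)
qed (auto intro: superlevels_in_multichains membership_count_in_order_points
    superlevels_membership_count)

lemma sum_card_superlevels:
  assumes "finite A" and "z \<in> A \<rightarrow>\<^sub>E {0..k}"
  shows "(\<Sum>e\<leftarrow>superlevels A k z. card e) = (\<Sum>p\<in>A. z p)"
proof -
  have "(\<Sum>e\<leftarrow>superlevels A k z. card e) = (\<Sum>i<k. card {p\<in>A. k - i \<le> z p})"
    by (simp add: superlevels_def sum_set_upt_conv_sum_list_nat[symmetric] atLeast0LessThan)
  also have "\<dots> = (\<Sum>i<k. \<Sum>p\<in>A. of_bool (k - i \<le> z p))"
    using assms(1) by (simp add: Int_def conj_commute)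
  also have "\<dots> = (\<Sum>p\<in>A. \<Sum>i<k. of_bool (k - i \<le> z p))"
    by (rule sum.swap)
  also have "\<dots> = (\<Sum>p\<in>A. z p)"
  proof (rule sum.cong[OF refl])
    fix p assume "p \<in> A"
    then have "{..<k} \<inter> {i. k - i \<le> z p} = {k - z p..<k}"
      using assms(2) by (auto simp: PiE_iff)
    then show "(\<Sum>i<k. of_bool (k - i \<le> z p)) = z p"
      using \<open>p \<in> A\<close> assms(2) by (auto simp: PiE_iff)
  qed
  finally show ?thesis .
qed

lemma sum_multichains_lower_ideals:
  assumes "finite A"
  shows "(\<Sum>es\<in>multichains (lower_ideals A le) (\<subseteq>) k. qvar ^ (\<Sum>e\<leftarrow>es. card e))
       = order_gf A (\<lambda>x y. le y x) k"
proof -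
  have "(\<Sum>es\<in>multichains (lower_ideals A le) (\<subseteq>) k. qvar ^ (\<Sum>e\<leftarrow>es. card e))
      = (\<Sum>z\<in>order_points A (\<lambda>x y. le y x) k. qvar ^ (\<Sum>e\<leftarrow>superlevels A k z. card e))"
    by (rule sum.reindex_bij_betw[OF bij_betw_superlevels, symmetric])
  also have "\<dots> = order_gf A (\<lambda>x y. le y x) k"
    unfolding order_gf_def using assms
    by (intro sum.cong refl) (simp add: sum_card_superlevels order_points_def)
  finally show ?thesis .
qed

theorem mainTheorem3:
  fixes A :: "'a set" and le :: "'a \<Rightarrow> 'a \<Rightarrow> bool"
  assumes "finite A"
    and "\<And>x. x \<in> A \<Longrightarrow> le x x"
    and "\<And>x y. x \<in> A \<Longrightarrow> y \<in> A \<Longrightarrow> le x y \<Longrightarrow> le y x \<Longrightarrow> x = y"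
    and "\<And>x y z. x \<in> A \<Longrightarrow> y \<in> A \<Longrightarrow> z \<in> A \<Longrightarrow> le x y \<Longrightarrow> le y z \<Longrightarrow> le x z"
  shows "pcompose (qZeta (lower_ideals A le) (\<subseteq>) card) [:1, qvar:]
         = qOrder A (\<lambda>x y. le y x)"
proof -
  let ?L = "qOrder A (\<lambda>x y. le y x)"
  have "qZeta (lower_ideals A le) (\<subseteq>) card = pcompose ?L [:- 1 / qvar, 1 / qvar:]"
  proof (rule qZeta_eqI)
    fix n :: nat assume "2 \<le> n"
    then obtain k where n: "n = Suc k"
      by (cases n) auto
    have "poly (pcompose ?L [:- 1 / qvar, 1 / qvar:]) (qint n) = poly ?L (qint k)"
      using qvar_neq_0 by (simp add: n poly_pcompose qint_Suc field_simps)
    also have "\<dots> = (\<Sum>es\<in>multichains (lower_ideals A le) (\<subseteq>) k. qvar ^ (\<Sum>e\<leftarrow>es. card e))"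
      using assms(1) by (simp add: poly_qOrder_qint sum_multichains_lower_ideals)
    finally show "poly (pcompose ?L [:- 1 / qvar, 1 / qvar:]) (qint n)
        = (\<Sum>es\<in>multichains (lower_ideals A le) (\<subseteq>) (n - 1). qvar ^ (\<Sum>e\<leftarrow>es. card e))"
      by (simp add: n)
  qed
  moreover have "pcompose [:- 1 / qvar, 1 / qvar:] [:1, qvar:] = [:0, 1:]"
    using qvar_neq_0 by (simp add: pcompose_pCons)
  ultimately show ?thesis
    by (simp flip: pcompose_assoc)
qed

end
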